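(* Assume in addition $J\in L^\infty(\mathbb{R}^N)$. Let $0<T$, $\alpha>0$, $h\in L^\infty(\mathbb{R}^N\setminus\Omega)$ with $h\ge0$ and $\int_\Omega\int_{\mathbb{R}^N\setminus\Omega}J(x-y)h(y)\,dy\,dx>0$, and $u_0\in L^\infty(\Omega)$, $u_0\ge0$. Let $u$ be the solution of (N) on $[0,T)$ with $g(y,t)=h(y)(T-t)^{-\alpha}$ and $u(\cdot,0)=u_0$. Then $u$ blows up at time $T$ (i.e. $\|u(\cdot,t)\|_{L^\infty(\Omega)}$ is unbounded as $t\nearrow T$) if and only if $\alpha\ge1$.
   Context: Standing assumptions: $\Omega\subset\mathbb{R}^N$ bounded, connected, smooth; $J\ge0$ symmetric, $\int J=1$, $J>0$ on $B(0,d)$, $J=0$ outside $B(0,d)$. Problem (N): $u_t(x,t)=\int_\Omega J(x-y)(u(y,t)-u(x,t))dy+\int_{\mathbb{R}^N\setminus\Omega}J(x-y)g(y,t)dy$ for $x\in\Omega$ (time-integrated form). *)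

theory Defs
  imports "HOL-Analysis.Analysis"
begin

definition nonlocal_kernel :: "('a::euclidean_space \<Rightarrow> real) \<Rightarrow> real \<Rightarrow> bool" where
  "nonlocal_kernel J d \<longleftrightarrow>
     d > 0 \<and> J \<in> borel_measurable lebesgue \<and> (\<forall>x. J x \<ge> 0) \<and> (\<forall>x. J (- x) = J x) \<and>
     integrable lebesgue J \<and> integral\<^sup>L lebesgue J = 1 \<and>
     (\<forall>x. norm x < d \<longrightarrow> J x > 0) \<and> (\<forall>x. norm x \<ge> d \<longrightarrow> J x = 0)"

definition ess_bounded_on :: "'a::euclidean_space set \<Rightarrow> ('a \<Rightarrow> real) \<Rightarrow> bool" where
  "ess_bounded_on S f \<longleftrightarrow> (\<exists>C. AE x in lebesgue. x \<in> S \<longrightarrow> \<bar>f x\<bar> \<le> C)"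

text \<open>u is a solution of problem (N) on [0,T) with exterior datum g and initial datum u0,
  in time-integrated form: u is measurable on Omega x [0,T), essentially bounded on
  Omega x [0,T'] for every T' < T, and for a.e. x in Omega and all t in [0,T)
  u(x,t) = u0(x) + int_0^t ( int_Omega J(x-y)(u(y,s)-u(x,s)) dy
                             + int_{R^N \ Omega} J(x-y) g(y,s) dy ) ds.\<close>
definition solves_N ::
  "'a::euclidean_space set \<Rightarrow> ('a \<Rightarrow> real) \<Rightarrow> ('a \<Rightarrow> real \<Rightarrow> real) \<Rightarrow> real \<Rightarrow> ('a \<Rightarrow> real)
     \<Rightarrow> ('a \<Rightarrow> real \<Rightarrow> real) \<Rightarrow> bool" where
  "solves_N \<Omega> J g T u0 u \<longleftrightarrow>
     (\<lambda>(x, t). indicator (\<Omega> \<times> {0..<T}) (x, t) * u x t) \<in> borel_measurable (lebesgue \<Otimes>\<^sub>M lborel) \<and>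
     (\<forall>T'\<in>{0..<T}. \<exists>C. AE x in lebesgue. x \<in> \<Omega> \<longrightarrow> (\<forall>t\<in>{0..T'}. \<bar>u x t\<bar> \<le> C)) \<and>
     (AE x in lebesgue. x \<in> \<Omega> \<longrightarrow> (\<forall>t\<in>{0..<T}.
        u x t = u0 x + (LBINT s=0..t.
           (LINT y:\<Omega>|lebesgue. J (x - y) * (u y s - u x s)) +
           (LINT y:(UNIV - \<Omega>)|lebesgue. J (x - y) * g y s))))"

definition blows_up_at :: "'a::euclidean_space set \<Rightarrow> ('a \<Rightarrow> real \<Rightarrow> real) \<Rightarrow> real \<Rightarrow> bool" where
  "blows_up_at \<Omega> u T \<longleftrightarrow>
     (\<forall>C. \<exists>t\<in>{0..<T}. \<not> (AE x in lebesgue. x \<in> \<Omega> \<longrightarrow> \<bar>u x t\<bar> \<le> C))"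

end

theory Submission
  imports Defs
begin

text \<open>
  The nonlocal diffusion term is bounded by \<open>2 \<parallel>u(\<cdot>,s)\<parallel>\<^sub>\<infinity>\<close> because \<open>J\<close> has mass one.

  If \<open>\<alpha> < 1\<close>, the forcing \<open>(T - s) powr (- \<alpha>)\<close> is integrable up to \<open>T\<close>, so
  \<open>\<bar>u(x,t)\<bar> \<le> K + 2 \<integral>\<^sub>0\<^sup>t \<parallel>u(\<cdot>,s)\<parallel>\<^sub>\<infinity> ds\<close> with \<open>K = \<parallel>u0\<parallel>\<^sub>\<infinity> + \<parallel>h\<parallel>\<^sub>\<infinity> T powr (1 - \<alpha>) / (1 - \<alpha>)\<close>.
  Iterating this Gronwall inequality from the local a priori bound of the solution gives
  \<open>\<parallel>u(\<cdot>,t)\<parallel>\<^sub>\<infinity> \<le> K exp (2 t)\<close>, uniformly for \<open>t < T\<close>.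

  If \<open>\<alpha> \<ge> 1\<close> and \<open>\<bar>u\<bar> \<le> C\<close> on \<open>\<Omega> \<times> [0,T)\<close>, the diffusion term is at least \<open>-2C\<close>, hence
  \<open>u(x,t) \<ge> -2Ct + G(x) T powr (1 - \<alpha>) ln (T / (T - t))\<close>, where \<open>G(x)\<close> is the integral of
  \<open>J(x - y) h(y)\<close> over the complement of \<open>\<Omega>\<close>. As \<open>G\<close> has positive integral over \<open>\<Omega>\<close>, it
  exceeds some \<open>\<epsilon> > 0\<close> on a set of positive measure, and there \<open>u\<close> exceeds \<open>C\<close> for \<open>t\<close>
  close to \<open>T\<close>.
\<close>

lemma sigma_finite_lebesgue: "sigma_finite_measure (lebesgue :: 'a::euclidean_space measure)"
proof
  obtain A :: "'a set set" where A: "countable A" "A \<subseteq> sets lborel" "\<Union>A = space lborel"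
      "\<forall>a\<in>A. emeasure lborel a \<noteq> \<infinity>"
    using sigma_finite_measure.sigma_finite_countable[OF sigma_finite_lborel] by blast
  then show "\<exists>A::'a set set. countable A \<and> A \<subseteq> sets lebesgue \<and> \<Union>A = space lebesgue \<and>
      (\<forall>a\<in>A. emeasure lebesgue a \<noteq> \<infinity>)"
    by (intro exI[of _ A]) auto
qed

lemma
  fixes x :: "'a::euclidean_space"
  shows measurable_reflection: "(\<lambda>y. x - y) \<in> lebesgue \<rightarrow>\<^sub>M lebesgue"
    and distr_lebesgue_reflection: "distr lebesgue lebesgue (\<lambda>y. x - y) = lebesgue"
proof -
  have affine: "(\<lambda>y. x + (\<Sum>j\<in>Basis. ((\<lambda>_. -1) j * (y \<bullet> j)) *\<^sub>R j)) = (\<lambda>y. x - y)"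
    by (auto simp: euclidean_representation sum_negf)
  show "(\<lambda>y. x - y) \<in> lebesgue \<rightarrow>\<^sub>M lebesgue"
    using lebesgue_affine_measurable[where c="\<lambda>_. -1" and t=x, unfolded affine] by simp
  show "distr lebesgue lebesgue (\<lambda>y. x - y) = lebesgue"
    using lebesgue_affine_euclidean[where c="\<lambda>_. -1" and t=x, unfolded affine]
    by (simp add: density_1)
qed

lemma
  fixes J :: "'a::euclidean_space \<Rightarrow> real"
  assumes "integrable lebesgue J"
  shows integrable_reflection: "integrable lebesgue (\<lambda>y. J (x - y))"
    and integral_reflection: "(\<integral>y. J (x - y) \<partial>lebesgue) = integral\<^sup>L lebesgue J"
proof -
  have J: "J \<in> borel_measurable lebesgue"
    using assms by simp
  show "integrable lebesgue (\<lambda>y. J (x - y))"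
    using assms integrable_distr_eq[OF measurable_reflection J] by (simp add: distr_lebesgue_reflection)
  show "(\<integral>y. J (x - y) \<partial>lebesgue) = integral\<^sup>L lebesgue J"
    using integral_distr[OF measurable_reflection J] by (simp add: distr_lebesgue_reflection)
qed

lemma set_integral_abs_le:
  fixes f g :: "'b \<Rightarrow> real"
  assumes "set_integrable M S g" and "AE y in M. y \<in> S \<longrightarrow> \<bar>f y\<bar> \<le> g y"
  shows "\<bar>LINT y:S|M. f y\<bar> \<le> (LINT y:S|M. g y)"
proof -
  have "\<bar>LINT y:S|M. f y\<bar> \<le> (\<integral>y. \<bar>indicator S y *\<^sub>R f y\<bar> \<partial>M)"
    unfolding set_lebesgue_integral_def by (rule integral_abs_bound)
  also have "\<dots> \<le> (LINT y:S|M. g y)"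
    unfolding set_lebesgue_integral_def
  proof (rule integral_mono_AE')
    show "integrable M (\<lambda>y. indicator S y *\<^sub>R g y)"
      using assms(1) by (simp add: set_integrable_def)
  qed (use assms(2) in \<open>auto simp: indicator_def\<close>)
  finally show ?thesis .
qed

lemma set_integral_posE:
  fixes f :: "'b \<Rightarrow> real"
  assumes "0 < (LINT x:S|M. f x)"
  obtains \<epsilon> where "0 < \<epsilon>" "\<not> (AE x in M. x \<in> S \<longrightarrow> f x \<le> \<epsilon>)"
proof (rule ccontr)
  assume "\<not> thesis"
  then have "\<forall>n. AE x in M. x \<in> S \<longrightarrow> f x \<le> inverse (real (Suc n))"
    using that by (metis inverse_positive_iff_positive of_nat_0_less_iff zero_less_Suc)
  then have "AE x in M. \<forall>n. x \<in> S \<longrightarrow> f x \<le> inverse (real (Suc n))"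
    by (subst AE_all_countable) blast
  then have "AE x in M. indicator S x *\<^sub>R f x \<le> 0"
    by eventually_elim (auto simp: indicator_def intro!: LIMSEQ_le_const[OF LIMSEQ_inverse_real_of_nat])
  then have "(LINT x:S|M. f x) \<le> 0"
    unfolding set_lebesgue_integral_def using integral_mono_AE'[of M "\<lambda>_. 0"] by simp
  with assms show False
    by simp
qed

lemma AE_AE_of_all_AE:
  assumes "sigma_finite_measure M" "sigma_finite_measure N"
    and "Measurable.pred (M \<Otimes>\<^sub>M N) (\<lambda>z. P (fst z) (snd z))"
    and "\<And>y. AE x in M. P x y"
  shows "AE x in M. AE y in N. P x y"
proof -
  interpret pair_sigma_finite M N
    using assms(1,2) by (simp add: pair_sigma_finite_def)
  have "AE y in N. AE x in M. P x y"
    using assms(4) by simp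
  then show ?thesis
    using AE_commute[of P] assms(3) by (simp add: pred_def)
qed

section \<open>Averages against the kernel\<close>

lemma kernel_average_abs_le:
  fixes J f :: "'a::euclidean_space \<Rightarrow> real"
  assumes "\<And>z. 0 \<le> J z" "integrable lebesgue J" "integral\<^sup>L lebesgue J = 1"
    and "S \<in> sets lebesgue" "0 \<le> B" "AE y in lebesgue. y \<in> S \<longrightarrow> \<bar>f y\<bar> \<le> B"
  shows "\<bar>LINT y:S|lebesgue. J (x - y) * f y\<bar> \<le> B"
proof -
  have J_x: "integrable lebesgue (\<lambda>y. J (x - y))"
    using assms(2) by (rule integrable_reflection)
  have J_x_S: "set_integrable lebesgue S (\<lambda>y. J (x - y))"
    unfolding set_integrable_def using integrable_mult_indicator[OF assms(4) J_x] .
  have mass: "(LINT y:S|lebesgue. J (x - y)) \<le> 1"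
  proof -
    have "(LINT y:S|lebesgue. J (x - y)) \<le> (\<integral>y. J (x - y) \<partial>lebesgue)"
      unfolding set_lebesgue_integral_def
      by (rule integral_mono[OF J_x_S[unfolded set_integrable_def] J_x])
        (use assms(1) in \<open>auto simp: indicator_def\<close>)
    then show ?thesis
      using assms(3) by (simp add: integral_reflection[OF assms(2)])
  qed
  have "\<bar>LINT y:S|lebesgue. J (x - y) * f y\<bar> \<le> (LINT y:S|lebesgue. J (x - y) * B)"
    by (rule set_integral_abs_le)
      (use J_x_S assms(1,6) in \<open>auto simp: abs_mult intro!: mult_left_mono\<close>)
  also have "\<dots> = (LINT y:S|lebesgue. J (x - y)) * B"
    by simp
  also have "\<dots> \<le> B"
    using mult_right_mono[OF mass assms(5)] by simp
  finally show ?thesis .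
qed

lemma nonlocal_difference_abs_le:
  fixes J f :: "'a::euclidean_space \<Rightarrow> real"
  assumes "\<And>z. 0 \<le> J z" "integrable lebesgue J" "integral\<^sup>L lebesgue J = 1"
    and "S \<in> sets lebesgue" "AE y in lebesgue. y \<in> S \<longrightarrow> \<bar>f y\<bar> \<le> B" "\<bar>f x\<bar> \<le> B"
  shows "\<bar>LINT y:S|lebesgue. J (x - y) * (f y - f x)\<bar> \<le> 2 * B"
  using assms(5,6)
  by (intro kernel_average_abs_le[OF assms(1-4)]) auto

lemma measurable_nonlocal_difference:
  fixes U :: "'a::euclidean_space \<times> real \<Rightarrow> real" and J :: "'a \<Rightarrow> real"
  assumes "U \<in> borel_measurable (lebesgue \<Otimes>\<^sub>M lborel)" "J \<in> borel_measurable lebesgue" "\<Omega> \<in> sets lebesgue"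
  shows "(\<lambda>s. LINT y:\<Omega>|lebesgue. J (x - y) * (U (y, s) - U (x, s))) \<in> borel_measurable lborel"
proof -
  have "(\<lambda>z. U (snd z, fst z)) \<in> borel_measurable (lborel \<Otimes>\<^sub>M lebesgue)"
    using measurable_comp[OF measurable_pair_swap' assms(1)] by (simp add: comp_def case_prod_beta)
  moreover have "(\<lambda>z. U (x, fst z)) \<in> borel_measurable (lborel \<Otimes>\<^sub>M lebesgue)"
    using measurable_comp[OF measurable_fst measurable_Pair2[OF assms(1), of x]] by (simp add: comp_def)
  moreover have "(\<lambda>z. J (x - snd z)) \<in> borel_measurable (lborel \<Otimes>\<^sub>M lebesgue)"
    using measurable_comp[OF measurable_snd measurable_comp[OF measurable_reflection assms(2)]]
    by (simp add: comp_def)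
  ultimately have "(\<lambda>z. indicator \<Omega> (snd z) *\<^sub>R (J (x - snd z) * (U (snd z, fst z) - U (x, fst z))))
      \<in> borel_measurable (lborel \<Otimes>\<^sub>M lebesgue)"
    using assms(3) by measurable
  then show ?thesis
    unfolding set_lebesgue_integral_def
    by (intro sigma_finite_measure.borel_measurable_lebesgue_integral[OF sigma_finite_lebesgue])
      (simp add: case_prod_beta)
qed

section \<open>Integrals in time\<close>

text \<open>In \<open>LBINT r=0..b\<close> the lower limit is the numeral \<open>0 :: ereal\<close>, not \<open>ereal 0\<close>; the
  following facts are stated with that literal so that they rewrite such integrals directly.\<close>

lemma interval_integral_abs_le:
  fixes f g :: "real \<Rightarrow> real"
  assumes "0 \<le> b" "continuous_on {0..b} g" "\<And>r. r \<in> {0..b} \<Longrightarrow> \<bar>f r\<bar> \<le> g r"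
  shows "\<bar>LBINT r=0..b. f r\<bar> \<le> (LBINT r=0..b. g r)"
  unfolding interval_integral_Icc[OF assms(1), folded zero_ereal_def]
  by (rule set_integral_abs_le)
    (use borel_integrable_atLeastAtMost'[OF assms(2)] assms(3) in \<open>auto simp: set_integrable_def\<close>)

lemma interval_integral_mono_AE:
  fixes f g :: "real \<Rightarrow> real"
  assumes "0 \<le> b" "continuous_on {0..b} g" "set_integrable lborel {0..b} f"
    and "AE r in lborel. r \<in> {0..b} \<longrightarrow> g r \<le> f r"
  shows "(LBINT r=0..b. g r) \<le> (LBINT r=0..b. f r)"
  unfolding interval_integral_Icc[OF assms(1), folded zero_ereal_def]
  by (rule set_integral_mono_AE)
    (use borel_integrable_atLeastAtMost'[OF assms(2)] assms(3,4) in \<open>auto simp: set_integrable_def\<close>)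

lemma interval_integral_FTC_real:
  fixes f F :: "real \<Rightarrow> real"
  assumes "0 \<le> b" "continuous_on {0..b} f" "\<And>r. r \<in> {0..b} \<Longrightarrow> (F has_real_derivative f r) (at r)"
  shows "(LBINT r=0..b. f r) = F b - F 0"
  using assms interval_integral_FTC_finite[of 0 b f F]
  by (simp add: zero_ereal_def has_real_derivative_iff_has_vector_derivative[symmetric]
      has_field_derivative_at_within)

lemma interval_integral_exp_iterate:
  fixes K C L z :: real
  assumes "0 \<le> z"
  shows "(LBINT r=0..z. L * (K * exp (L * r) + C * (L * r) ^ n / fact n))
    = K * exp (L * z) + C * (L * z) ^ Suc n / fact (Suc n) - K"
proof -
  have "((\<lambda>r. (L * r) ^ Suc n) has_real_derivative real (Suc n) * (L * (L * r) ^ n)) (at r)" for r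
    using DERIV_power[OF DERIV_cmult_Id[of L r UNIV], of "Suc n"] by (simp only: diff_Suc_Suc diff_zero)
  then have "((\<lambda>r. K * exp (L * r) + C * (L * r) ^ Suc n / fact (Suc n)) has_real_derivative
      K * (exp (L * r) * L) + C * (real (Suc n) * (L * (L * r) ^ n)) / fact (Suc n)) (at r)" for r
    by (intro DERIV_add DERIV_cmult DERIV_cdivide) (auto intro!: derivative_eq_intros)
  moreover have "K * (exp (L * r) * L) + C * (real (Suc n) * (L * (L * r) ^ n)) / fact (Suc n)
      = L * (K * exp (L * r) + C * (L * r) ^ n / fact n)" for r
    by (simp add: fact_Suc field_simps del: of_nat_Suc)
  ultimately show ?thesis
    using assms
    by (subst interval_integral_FTC_real[where F = "\<lambda>r. K * exp (L * r) + C * (L * r) ^ Suc n / fact (Suc n)"])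
      (auto intro!: continuous_intros)
qed

lemma interval_integral_powr_singularity:
  fixes T \<alpha> z :: real
  assumes "0 \<le> z" "z < T" "\<alpha> \<noteq> 1"
  shows "(LBINT r=0..z. (T - r) powr (- \<alpha>)) = (T powr (1 - \<alpha>) - (T - z) powr (1 - \<alpha>)) / (1 - \<alpha>)"
proof -
  have "((\<lambda>r. (T - r) powr (1 - \<alpha>) / (\<alpha> - 1)) has_real_derivative (T - r) powr (- \<alpha>)) (at r)"
    if "r < T" for r
  proof -
    have "((\<lambda>r. (T - r) powr (1 - \<alpha>)) has_real_derivative (1 - \<alpha>) * (T - r) powr (- \<alpha>) * (0 - 1))
        (at r)"
      using that by (auto intro!: derivative_eq_intros)
    then have "((\<lambda>r. (T - r) powr (1 - \<alpha>) / (\<alpha> - 1)) has_real_derivative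
        (1 - \<alpha>) * (T - r) powr (- \<alpha>) * (0 - 1) / (\<alpha> - 1)) (at r)"
      by (rule DERIV_cdivide)
    also have "(1 - \<alpha>) * (T - r) powr (- \<alpha>) * (0 - 1) / (\<alpha> - 1) = (T - r) powr (- \<alpha>)"
      using assms(3) by (simp add: divide_simps algebra_simps)
    finally show ?thesis .
  qed
  moreover have "(T - z) powr (1 - \<alpha>) / (\<alpha> - 1) - T powr (1 - \<alpha>) / (\<alpha> - 1)
      = (T powr (1 - \<alpha>) - (T - z) powr (1 - \<alpha>)) / (1 - \<alpha>)"
    by (simp add: minus_diff_eq[of 1 \<alpha>, symmetric] diff_divide_distrib del: minus_diff_eq)
  ultimately show ?thesis
    using assms
    by (subst interval_integral_FTC_real[where F = "\<lambda>r. (T - r) powr (1 - \<alpha>) / (\<alpha> - 1)"])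
      (auto intro!: continuous_intros)
qed

lemma interval_integral_inverse_singularity:
  fixes T z :: real
  assumes "0 \<le> z" "z < T"
  shows "(LBINT r=0..z. 1 / (T - r)) = ln T - ln (T - z)"
proof -
  have "((\<lambda>r. - ln (T - r)) has_real_derivative 1 / (T - r)) (at r)" if "r < T" for r
    using that by (auto intro!: derivative_eq_intros)
  then show ?thesis
    using assms by (subst interval_integral_FTC_real[where F = "\<lambda>r. - ln (T - r)"])
      (auto intro!: continuous_intros)
qed

lemma interval_integral_powr_singularity_ge_ln:
  fixes T \<alpha> z :: real
  assumes "0 \<le> z" "z < T" "1 \<le> \<alpha>"
  shows "T powr (1 - \<alpha>) * (ln T - ln (T - z)) \<le> (LBINT r=0..z. (T - r) powr (- \<alpha>))"
proof -
  have pointwise: "T powr (1 - \<alpha>) * (1 / (T - r)) \<le> (T - r) powr (- \<alpha>)" if "r \<in> {0..z}" for r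
  proof -
    have "T powr (1 - \<alpha>) \<le> (T - r) powr (1 - \<alpha>)"
      using that assms by (intro powr_mono2') auto
    also have "\<dots> = (T - r) * (T - r) powr (- \<alpha>)"
      using that assms by (simp add: powr_add[of "T - r" 1 "- \<alpha>", simplified])
    finally show ?thesis
      using that assms by (simp add: divide_le_eq mult.commute)
  qed
  have "continuous_on {0..z} (\<lambda>r. (T - r) powr (- \<alpha>))"
    using assms by (intro continuous_intros) auto
  then have "(LBINT r=0..z. T powr (1 - \<alpha>) * (1 / (T - r))) \<le> (LBINT r=0..z. (T - r) powr (- \<alpha>))"
    using assms pointwise
    by (intro interval_integral_mono_AE borel_integrable_atLeastAtMost') (auto intro!: continuous_intros)
  then show ?thesis
    by (simp only: interval_lebesgue_integral_mult_right interval_integral_inverse_singularity[OF assms(1,2)])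
qed

lemma tendsto_power_over_fact: "(\<lambda>n. C * x ^ n / fact n :: real) \<longlonglongrightarrow> 0"
  using tendsto_mult_right_zero[OF summable_LIMSEQ_zero[OF summable_exp], of C x]
  by (simp add: field_simps)

lemma exp_iterate_powr_singularity_le:
  fixes K C H U0 T \<alpha> z :: real
  assumes "0 \<le> z" "z < T" "\<alpha> < 1" "0 \<le> H" "U0 + H * T powr (1 - \<alpha>) / (1 - \<alpha>) \<le> K"
  shows "U0 + (LBINT s=0..z. 2 * (K * exp (2 * s) + C * (2 * s) ^ n / fact n) + H * (T - s) powr (- \<alpha>))
    \<le> K * exp (2 * z) + C * (2 * z) ^ Suc n / fact (Suc n)"
proof -
  have integrable: "interval_lebesgue_integrable lborel 0 z f" if "continuous_on {0..z} f" for f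
    using interval_integrable_continuous_on[OF assms(1) that] by (simp add: zero_ereal_def)
  have "(LBINT s=0..z. 2 * (K * exp (2 * s) + C * (2 * s) ^ n / fact n) + H * (T - s) powr (- \<alpha>))
      = (LBINT s=0..z. 2 * (K * exp (2 * s) + C * (2 * s) ^ n / fact n)) + (LBINT s=0..z. H * (T - s) powr (- \<alpha>))"
    using assms by (intro interval_lebesgue_integral_add(2) integrable continuous_intros) auto
  also have "\<dots> = K * exp (2 * z) + C * (2 * z) ^ Suc n / fact (Suc n) - K
      + H * ((T powr (1 - \<alpha>) - (T - z) powr (1 - \<alpha>)) / (1 - \<alpha>))"
    using assms by (simp only: interval_integral_exp_iterate interval_lebesgue_integral_mult_right[of _ _ _ H]
        interval_integral_powr_singularity less_irrefl)
  also have "\<dots> \<le> K * exp (2 * z) + C * (2 * z) ^ Suc n / fact (Suc n) - K + H * T powr (1 - \<alpha>) / (1 - \<alpha>)"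
    using assms by (auto intro!: mult_left_mono divide_right_mono)
  finally show ?thesis
    using assms(5) by linarith
qed

section \<open>Solutions of problem (N)\<close>

lemma nonlocal_kernelD:
  assumes "nonlocal_kernel J d"
  shows "0 \<le> J z" "integrable lebesgue J" "integral\<^sup>L lebesgue J = 1" "J \<in> borel_measurable lebesgue"
  using assms unfolding nonlocal_kernel_def by auto

lemma ess_bounded_onE:
  assumes "ess_bounded_on S f"
  obtains C where "0 \<le> C" "AE x in lebesgue. x \<in> S \<longrightarrow> \<bar>f x\<bar> \<le> C"
proof -
  obtain C where "AE x in lebesgue. x \<in> S \<longrightarrow> \<bar>f x\<bar> \<le> C"
    using assms unfolding ess_bounded_on_def by blast
  then have "AE x in lebesgue. x \<in> S \<longrightarrow> \<bar>f x\<bar> \<le> max C 0"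
    by eventually_elim auto
  then show thesis
    using that[of "max C 0"] by simp
qed

lemma solves_N_measurable:
  assumes "solves_N \<Omega> J g T u0 u"
  shows "(\<lambda>(x, t). indicator (\<Omega> \<times> {0..<T}) (x, t) * u x t) \<in> borel_measurable (lebesgue \<Otimes>\<^sub>M lborel)"
  using assms unfolding solves_N_def by blast

lemma solves_N_boundedE:
  assumes "solves_N \<Omega> J g T u0 u" "0 \<le> t" "t < T"
  obtains C where "AE x in lebesgue. x \<in> \<Omega> \<longrightarrow> (\<forall>s\<in>{0..t}. \<bar>u x s\<bar> \<le> C)"
  using assms unfolding solves_N_def by (meson atLeastLessThan_iff)

lemma solves_N_integral_equation:
  assumes "solves_N \<Omega> J g T u0 u"
  shows "AE x in lebesgue. x \<in> \<Omega> \<longrightarrow> (\<forall>t\<in>{0..<T}. u x t = u0 x + (LBINT s=0..t.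
      (LINT y:\<Omega>|lebesgue. J (x - y) * (u y s - u x s)) + (LINT y:(UNIV - \<Omega>)|lebesgue. J (x - y) * g y s)))"
  using assms unfolding solves_N_def by blast

lemma solves_N_abs_le_step:
  fixes \<Omega> :: "'a::euclidean_space set" and J u0 :: "'a \<Rightarrow> real" and g u :: "'a \<Rightarrow> real \<Rightarrow> real"
  assumes J: "\<And>z. 0 \<le> J z" "integrable lebesgue J" "integral\<^sup>L lebesgue J = 1"
    and \<Omega>: "\<Omega> \<in> sets lebesgue" and sol: "solves_N \<Omega> J g T u0 u" and t: "0 \<le> t" "t < T"
    and u0: "AE x in lebesgue. x \<in> \<Omega> \<longrightarrow> \<bar>u0 x\<bar> \<le> U0"
    and g: "\<And>s. s \<in> {0..t} \<Longrightarrow> AE y in lebesgue. y \<in> UNIV - \<Omega> \<longrightarrow> \<bar>g y s\<bar> \<le> \<gamma> s"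
      "\<And>s. s \<in> {0..t} \<Longrightarrow> 0 \<le> \<gamma> s" "continuous_on {0..t} \<gamma>"
    and \<phi>: "AE x in lebesgue. x \<in> \<Omega> \<longrightarrow> (\<forall>s\<in>{0..t}. \<bar>u x s\<bar> \<le> \<phi> s)" "continuous_on {0..t} \<phi>"
  shows "AE x in lebesgue. x \<in> \<Omega> \<longrightarrow> (\<forall>z\<in>{0..t}. \<bar>u x z\<bar> \<le> U0 + (LBINT s=0..z. 2 * \<phi> s + \<gamma> s))"
proof -
  have \<phi>_at: "AE y in lebesgue. y \<in> \<Omega> \<longrightarrow> \<bar>u y s\<bar> \<le> \<phi> s" if "s \<in> {0..t}" for s
    using \<phi>(1) by eventually_elim (use that in blast)
  from solves_N_integral_equation[OF sol] u0 \<phi>(1) show ?thesis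
  proof eventually_elim
    case (elim x)
    show ?case
    proof (intro impI ballI)
      fix z assume x: "x \<in> \<Omega>" and z: "z \<in> {0..t}"
      have flux: "\<bar>(LINT y:\<Omega>|lebesgue. J (x - y) * (u y s - u x s)) +
          (LINT y:(UNIV - \<Omega>)|lebesgue. J (x - y) * g y s)\<bar> \<le> 2 * \<phi> s + \<gamma> s"
        if "s \<in> {0..z}" for s
      proof -
        have s: "s \<in> {0..t}"
          using that z by auto
        have "\<bar>LINT y:\<Omega>|lebesgue. J (x - y) * (u y s - u x s)\<bar> \<le> 2 * \<phi> s"
          using elim x s by (intro nonlocal_difference_abs_le[OF J \<Omega> \<phi>_at]) auto
        moreover have "\<bar>LINT y:(UNIV - \<Omega>)|lebesgue. J (x - y) * g y s\<bar> \<le> \<gamma> s"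
          using \<Omega> s by (intro kernel_average_abs_le[OF J] g) auto
        ultimately show ?thesis
          by linarith
      qed
      have "continuous_on {0..z} (\<lambda>s. 2 * \<phi> s + \<gamma> s)"
        using z by (intro continuous_intros continuous_on_subset[OF \<phi>(2)] continuous_on_subset[OF g(3)]) auto
      then have "\<bar>LBINT s=0..z. (LINT y:\<Omega>|lebesgue. J (x - y) * (u y s - u x s)) +
          (LINT y:(UNIV - \<Omega>)|lebesgue. J (x - y) * g y s)\<bar> \<le> (LBINT s=0..z. 2 * \<phi> s + \<gamma> s)"
        using z flux by (intro interval_integral_abs_le) auto
      moreover have "u x z = u0 x + (LBINT s=0..z. (LINT y:\<Omega>|lebesgue. J (x - y) * (u y s - u x s)) +
          (LINT y:(UNIV - \<Omega>)|lebesgue. J (x - y) * g y s))"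
        using elim x z t by (meson atLeastAtMost_iff atLeastLessThan_iff le_less_trans)
      ultimately show "\<bar>u x z\<bar> \<le> U0 + (LBINT s=0..z. 2 * \<phi> s + \<gamma> s)"
        using elim x by linarith
    qed
  qed
qed

lemma solves_N_exp_bound:
  fixes \<Omega> :: "'a::euclidean_space set" and J h u0 :: "'a \<Rightarrow> real" and u :: "'a \<Rightarrow> real \<Rightarrow> real"
  assumes J: "nonlocal_kernel J d" and \<Omega>: "\<Omega> \<in> sets lebesgue" and "\<alpha> < 1"
    and sol: "solves_N \<Omega> J (\<lambda>y t. h y * (T - t) powr (- \<alpha>)) T u0 u"
    and h: "0 \<le> H" "AE y in lebesgue. y \<in> UNIV - \<Omega> \<longrightarrow> \<bar>h y\<bar> \<le> H"
    and u0: "0 \<le> U0" "AE x in lebesgue. x \<in> \<Omega> \<longrightarrow> \<bar>u0 x\<bar> \<le> U0"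
    and t: "0 \<le> t" "t < T"
  shows "AE x in lebesgue. x \<in> \<Omega> \<longrightarrow> \<bar>u x t\<bar> \<le> (U0 + H * T powr (1 - \<alpha>) / (1 - \<alpha>)) * exp (2 * t)"
proof -
  define K where "K = U0 + H * T powr (1 - \<alpha>) / (1 - \<alpha>)"
  have "0 \<le> K"
    using h u0 \<open>\<alpha> < 1\<close> by (simp add: K_def)
  obtain C where C: "AE x in lebesgue. x \<in> \<Omega> \<longrightarrow> (\<forall>s\<in>{0..t}. \<bar>u x s\<bar> \<le> C)"
    using sol t by (rule solves_N_boundedE)
  \<comment> \<open>Picard iterates of \<open>\<phi> \<mapsto> K + 2 \<integral>\<phi>\<close> started at the a priori bound \<open>C\<close>: the fixed point
    is \<open>K e\<^sup>2\<^sup>s\<close>, and the distance to it after \<open>n\<close> steps is \<open>C (2s)\<^sup>n / n!\<close>.\<close>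
  define \<phi> where "\<phi> n s = K * exp (2 * s) + C * (2 * s) ^ n / fact n" for n s
  have "AE x in lebesgue. x \<in> \<Omega> \<longrightarrow> (\<forall>s\<in>{0..t}. \<bar>u x s\<bar> \<le> \<phi> n s)" for n
  proof (induction n)
    case 0
    from C show ?case
      by eventually_elim (use \<open>0 \<le> K\<close> in \<open>auto simp: \<phi>_def intro: add_increasing\<close>)
  next
    case (Suc n)
    have "AE x in lebesgue. x \<in> \<Omega> \<longrightarrow>
        (\<forall>z\<in>{0..t}. \<bar>u x z\<bar> \<le> U0 + (LBINT s=0..z. 2 * \<phi> n s + H * (T - s) powr (- \<alpha>)))"
    proof (rule solves_N_abs_le_step[OF nonlocal_kernelD(1-3)[OF J] \<Omega> sol t u0(2) _ _ _ Suc])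
      fix s assume "s \<in> {0..t}"
      then show "AE y in lebesgue. y \<in> UNIV - \<Omega> \<longrightarrow> \<bar>h y * (T - s) powr (- \<alpha>)\<bar> \<le> H * (T - s) powr (- \<alpha>)"
        using h(2) by eventually_elim (auto simp: abs_mult intro: mult_right_mono)
    qed (use h t in \<open>auto intro!: continuous_intros simp: \<phi>_def\<close>)
    then show ?case
    proof eventually_elim
      case (elim x)
      then show ?case
        using exp_iterate_powr_singularity_le[of _ T \<alpha> H U0 K C n] h t \<open>\<alpha> < 1\<close>
        by (fastforce simp: \<phi>_def K_def)
    qed
  qed
  then have "AE x in lebesgue. \<forall>n. x \<in> \<Omega> \<longrightarrow> (\<forall>s\<in>{0..t}. \<bar>u x s\<bar> \<le> \<phi> n s)"
    by (subst AE_all_countable) blast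
  then show ?thesis
  proof eventually_elim
    case (elim x)
    have "(\<lambda>n. \<phi> n t) \<longlonglongrightarrow> K * exp (2 * t) + 0"
      unfolding \<phi>_def by (intro tendsto_add tendsto_const tendsto_power_over_fact)
    then show ?case
      using elim t by (auto simp: K_def intro: LIMSEQ_le_const)
  qed
qed

lemma solves_N_not_blows_up_of_alpha_lt_1:
  fixes \<Omega> :: "'a::euclidean_space set" and J h u0 :: "'a \<Rightarrow> real" and u :: "'a \<Rightarrow> real \<Rightarrow> real"
  assumes J: "nonlocal_kernel J d" and \<Omega>: "\<Omega> \<in> sets lebesgue" and "\<alpha> < 1"
    and "ess_bounded_on (UNIV - \<Omega>) h" "ess_bounded_on \<Omega> u0"
    and sol: "solves_N \<Omega> J (\<lambda>y t. h y * (T - t) powr (- \<alpha>)) T u0 u"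
  shows "\<not> blows_up_at \<Omega> u T"
proof -
  obtain H where H: "0 \<le> H" "AE y in lebesgue. y \<in> UNIV - \<Omega> \<longrightarrow> \<bar>h y\<bar> \<le> H"
    using \<open>ess_bounded_on (UNIV - \<Omega>) h\<close> by (rule ess_bounded_onE)
  obtain U0 where U0: "0 \<le> U0" "AE x in lebesgue. x \<in> \<Omega> \<longrightarrow> \<bar>u0 x\<bar> \<le> U0"
    using \<open>ess_bounded_on \<Omega> u0\<close> by (rule ess_bounded_onE)
  define K where "K = U0 + H * T powr (1 - \<alpha>) / (1 - \<alpha>)"
  have "0 \<le> K"
    using H U0 \<open>\<alpha> < 1\<close> by (simp add: K_def)
  have "AE x in lebesgue. x \<in> \<Omega> \<longrightarrow> \<bar>u x t\<bar> \<le> K * exp (2 * T)" if "t \<in> {0..<T}" for t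
  proof -
    have t: "0 \<le> t" "t < T"
      using that by auto
    from solves_N_exp_bound[OF J \<Omega> \<open>\<alpha> < 1\<close> sol H U0 t] show ?thesis
    proof eventually_elim
      case (elim x)
      have "K * exp (2 * t) \<le> K * exp (2 * T)"
        using \<open>0 \<le> K\<close> t by (intro mult_left_mono) auto
      then show ?case
        using elim unfolding K_def by (blast intro: order_trans)
    qed
  qed
  then show ?thesis
    unfolding blows_up_at_def by blast
qed

lemma solves_N_set_integrable_nonlocal_difference:
  fixes \<Omega> :: "'a::euclidean_space set" and J u0 :: "'a \<Rightarrow> real" and g u :: "'a \<Rightarrow> real \<Rightarrow> real"
  assumes J: "nonlocal_kernel J d" and \<Omega>: "\<Omega> \<in> sets lebesgue" and sol: "solves_N \<Omega> J g T u0 u"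
    and t: "0 \<le> t" "t < T"
  shows "AE x in lebesgue. x \<in> \<Omega> \<longrightarrow>
    set_integrable lborel {0..t} (\<lambda>s. LINT y:\<Omega>|lebesgue. J (x - y) * (u y s - u x s))"
proof -
  define U where "U = (\<lambda>(x, t). indicator (\<Omega> \<times> {0..<T}) (x, t) * u x t)"
  have U: "U \<in> borel_measurable (lebesgue \<Otimes>\<^sub>M lborel)"
    unfolding U_def by (rule solves_N_measurable[OF sol])
  obtain B where B: "AE x in lebesgue. x \<in> \<Omega> \<longrightarrow> (\<forall>s\<in>{0..t}. \<bar>u x s\<bar> \<le> B)"
    using sol t by (rule solves_N_boundedE)
  have B_at: "AE y in lebesgue. y \<in> \<Omega> \<longrightarrow> \<bar>u y s\<bar> \<le> B" if "s \<in> {0..t}" for s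
    using B by eventually_elim (use that in blast)
  from B show ?thesis
  proof eventually_elim
    case (elim x)
    show ?case
    proof
      assume x: "x \<in> \<Omega>"
      have "(LINT y:\<Omega>|lebesgue. J (x - y) * (u y s - u x s))
          = (LINT y:\<Omega>|lebesgue. J (x - y) * (U (y, s) - U (x, s)))" if "s \<in> {0..t}" for s
        using x that t \<Omega> by (intro set_lebesgue_integral_cong) (auto simp: U_def)
      then have "(\<lambda>s. indicator {0..t} s *\<^sub>R (LINT y:\<Omega>|lebesgue. J (x - y) * (u y s - u x s)))
          = (\<lambda>s. indicator {0..t} s * (LINT y:\<Omega>|lebesgue. J (x - y) * (U (y, s) - U (x, s))))"
        by (auto simp: indicator_def)
      moreover have "(\<lambda>s. LINT y:\<Omega>|lebesgue. J (x - y) * (U (y, s) - U (x, s))) \<in> borel_measurable lborel"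
        using U nonlocal_kernelD(4)[OF J] \<Omega> by (rule measurable_nonlocal_difference)
      ultimately have "set_borel_measurable lborel {0..t} (\<lambda>s. LINT y:\<Omega>|lebesgue. J (x - y) * (u y s - u x s))"
        unfolding set_borel_measurable_def by simp
      moreover have "\<bar>LINT y:\<Omega>|lebesgue. J (x - y) * (u y s - u x s)\<bar> \<le> 2 * B" if "s \<in> {0..t}" for s
        using elim x that by (intro nonlocal_difference_abs_le[OF nonlocal_kernelD(1-3)[OF J] \<Omega> B_at]) auto
      then have "AE s in lborel. s \<in> {0..t} \<longrightarrow>
          norm (LINT y:\<Omega>|lebesgue. J (x - y) * (u y s - u x s)) \<le> norm (2 * B)"
        by (intro AE_I2) force
      moreover have "set_integrable lborel {0..t} (\<lambda>_. 2 * B)"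
        by (intro borel_integrable_atLeastAtMost' continuous_on_const)
      ultimately show "set_integrable lborel {0..t} (\<lambda>s. LINT y:\<Omega>|lebesgue. J (x - y) * (u y s - u x s))"
        using set_integrable_bound by blast
    qed
  qed
qed

lemma solves_N_AE_AE_abs_le:
  fixes \<Omega> :: "'a::euclidean_space set" and u :: "'a \<Rightarrow> real \<Rightarrow> real"
  assumes \<Omega>: "\<Omega> \<in> sets lebesgue" and sol: "solves_N \<Omega> J g T u0 u"
    and bounded: "\<forall>s\<in>{0..<T}. AE x in lebesgue. x \<in> \<Omega> \<longrightarrow> \<bar>u x s\<bar> \<le> C"
  shows "AE x in lebesgue. AE s in lborel. x \<in> \<Omega> \<and> s \<in> {0..<T} \<longrightarrow> \<bar>u x s\<bar> \<le> C"
proof -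
  define U where "U = (\<lambda>(x, t). indicator (\<Omega> \<times> {0..<T}) (x, t) * u x t)"
  have U: "U \<in> borel_measurable (lebesgue \<Otimes>\<^sub>M lborel)"
    unfolding U_def by (rule solves_N_measurable[OF sol])
  have U_eq: "(x \<in> \<Omega> \<and> s \<in> {0..<T} \<longrightarrow> \<bar>U (x, s)\<bar> \<le> C) \<longleftrightarrow> (x \<in> \<Omega> \<and> s \<in> {0..<T} \<longrightarrow> \<bar>u x s\<bar> \<le> C)"
    for x s
    by (auto simp: U_def)
  have "AE x in lebesgue. AE s in lborel. x \<in> \<Omega> \<and> s \<in> {0..<T} \<longrightarrow> \<bar>U (x, s)\<bar> \<le> C"
  proof (rule AE_AE_of_all_AE[OF sigma_finite_lebesgue sigma_finite_lborel])
    show "Measurable.pred (lebesgue \<Otimes>\<^sub>M lborel) (\<lambda>z. fst z \<in> \<Omega> \<and> snd z \<in> {0..<T} \<longrightarrow> \<bar>U (fst z, snd z)\<bar> \<le> C)"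
      using U \<Omega> by measurable
    show "AE x in lebesgue. x \<in> \<Omega> \<and> s \<in> {0..<T} \<longrightarrow> \<bar>U (x, s)\<bar> \<le> C" for s
    proof (cases "s \<in> {0..<T}")
      case True
      with bounded show ?thesis
        by (auto simp: U_def elim!: AE_mp)
    qed (auto intro: AE_I2)
  qed
  then show ?thesis
    by (simp only: U_eq)
qed

lemma solves_N_lower_bound_of_bounded:
  fixes \<Omega> :: "'a::euclidean_space set" and J h u0 :: "'a \<Rightarrow> real" and u :: "'a \<Rightarrow> real \<Rightarrow> real"
    and w :: "real \<Rightarrow> real"
  assumes J: "nonlocal_kernel J d" and \<Omega>: "\<Omega> \<in> sets lebesgue"
    and sol: "solves_N \<Omega> J (\<lambda>y s. h y * w s) T u0 u"
    and bounded: "\<forall>s\<in>{0..<T}. AE x in lebesgue. x \<in> \<Omega> \<longrightarrow> \<bar>u x s\<bar> \<le> C"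
    and t: "0 \<le> t" "t < T" and w: "continuous_on {0..t} w"
  shows "AE x in lebesgue. x \<in> \<Omega> \<longrightarrow>
    u0 x - 2 * C * t + (LINT y:(UNIV - \<Omega>)|lebesgue. J (x - y) * h y) * (LBINT s=0..t. w s) \<le> u x t"
  \<comment> \<open>The null set in \<open>bounded\<close> depends on the time; product measurability of \<open>u\<close> (Fubini)
    turns it into a bound at a.e. \<open>x\<close> for a.e. \<open>s\<close>, which is all the time integral needs.\<close>
  using solves_N_integral_equation[OF sol] solves_N_AE_AE_abs_le[OF \<Omega> sol bounded]
    solves_N_set_integrable_nonlocal_difference[OF J \<Omega> sol t]
proof eventually_elim
  case (elim x)
  show ?case
  proof
    assume x: "x \<in> \<Omega>"
    define G where "G = (LINT y:(UNIV - \<Omega>)|lebesgue. J (x - y) * h y)"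
    define A where "A s = (LINT y:\<Omega>|lebesgue. J (x - y) * (u y s - u x s))" for s
    have exterior: "(LINT y:(UNIV - \<Omega>)|lebesgue. J (x - y) * (h y * w s)) = G * w s" for s
      by (simp add: G_def mult.assoc[symmetric])
    have "AE s in lborel. s \<in> {0..t} \<longrightarrow> - 2 * C + G * w s \<le> A s + G * w s"
      using elim(2)
    proof eventually_elim
      case (elim s)
      show ?case
      proof
        assume s: "s \<in> {0..t}"
        with t have "AE y in lebesgue. y \<in> \<Omega> \<longrightarrow> \<bar>u y s\<bar> \<le> C"
          using bounded by auto
        then have "\<bar>A s\<bar> \<le> 2 * C"
          unfolding A_def using elim x s t
          by (intro nonlocal_difference_abs_le[OF nonlocal_kernelD(1-3)[OF J] \<Omega>]) auto
        then show "- 2 * C + G * w s \<le> A s + G * w s"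
          by linarith
      qed
    qed
    moreover have "set_integrable lborel {0..t} (\<lambda>s. A s + G * w s)"
    proof -
      have "set_integrable lborel {0..t} (\<lambda>s. G * w s)"
        using w by (intro borel_integrable_atLeastAtMost' continuous_intros)
      then show ?thesis
        using elim(3) x unfolding A_def by (intro set_integral_add(1)) auto
    qed
    ultimately have "(LBINT s=0..t. - 2 * C + G * w s) \<le> (LBINT s=0..t. A s + G * w s)"
      using t w by (intro interval_integral_mono_AE) (auto intro!: continuous_intros)
    moreover have "(LBINT s=0..t. - 2 * C + G * w s) = - 2 * C * t + G * (LBINT s=0..t. w s)"
      using interval_integrable_continuous_on[OF t(1) w]
      by (simp add: zero_ereal_def interval_lebesgue_integral_add(2))
    moreover have "u x t = u0 x + (LBINT s=0..t. A s + G * w s)"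
      unfolding A_def exterior[symmetric] using elim(1) x t by (meson atLeastLessThan_iff)
    ultimately show "u0 x - 2 * C * t + G * (LBINT s=0..t. w s) \<le> u x t"
      by linarith
  qed
qed

lemma solves_N_blows_up_of_alpha_ge_1:
  fixes \<Omega> :: "'a::euclidean_space set" and J h u0 :: "'a \<Rightarrow> real" and u :: "'a \<Rightarrow> real \<Rightarrow> real"
  assumes J: "nonlocal_kernel J d" and \<Omega>: "\<Omega> \<in> sets lebesgue" and "0 < T" "1 \<le> \<alpha>"
    and influx: "0 < (LINT x:\<Omega>|lebesgue. (LINT y:(UNIV - \<Omega>)|lebesgue. J (x - y) * h y))"
    and u0: "AE x in lebesgue. x \<in> \<Omega> \<longrightarrow> 0 \<le> u0 x"
    and sol: "solves_N \<Omega> J (\<lambda>y t. h y * (T - t) powr (- \<alpha>)) T u0 u"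
  shows "blows_up_at \<Omega> u T"
proof (rule ccontr)
  assume "\<not> blows_up_at \<Omega> u T"
  then obtain C where bounded: "\<forall>t\<in>{0..<T}. AE x in lebesgue. x \<in> \<Omega> \<longrightarrow> \<bar>u x t\<bar> \<le> C"
    unfolding blows_up_at_def by blast
  obtain \<epsilon> where "0 < \<epsilon>"
    and not_small: "\<not> (AE x in lebesgue. x \<in> \<Omega> \<longrightarrow> (LINT y:(UNIV - \<Omega>)|lebesgue. J (x - y) * h y) \<le> \<epsilon>)"
    using influx by (rule set_integral_posE)
  define M where "M = (2 * \<bar>C\<bar> * T + \<bar>C\<bar> + 1) / (\<epsilon> * T powr (1 - \<alpha>))"
  define t where "t = T - T * exp (- M)"
  have "0 < M"
    unfolding M_def using \<open>0 < \<epsilon>\<close> \<open>0 < T\<close>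
    by (intro divide_pos_pos mult_pos_pos add_nonneg_pos) auto
  then have t: "0 \<le> t" "t < T" and log: "ln T - ln (T - t) = M"
    using \<open>0 < T\<close> by (auto simp: t_def ln_mult)
  have w: "continuous_on {0..t} (\<lambda>s. (T - s) powr (- \<alpha>))"
    using t by (intro continuous_intros) auto
  have "AE x in lebesgue. x \<in> \<Omega> \<longrightarrow> \<bar>u x t\<bar> \<le> C"
    using bounded t by simp
  with solves_N_lower_bound_of_bounded[OF J \<Omega> sol bounded t w] u0
  have "AE x in lebesgue. x \<in> \<Omega> \<longrightarrow> (LINT y:(UNIV - \<Omega>)|lebesgue. J (x - y) * h y) \<le> \<epsilon>"
  proof eventually_elim
    case (elim x)
    define G where "G = (LINT y:(UNIV - \<Omega>)|lebesgue. J (x - y) * h y)"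
    have "G \<le> \<epsilon>" if x: "x \<in> \<Omega>"
    proof (rule ccontr)
      assume "\<not> G \<le> \<epsilon>"
      have u: "u0 x - 2 * C * t + G * (LBINT s=0..t. (T - s) powr (- \<alpha>)) \<le> u x t"
        "\<bar>u x t\<bar> \<le> C" "0 \<le> u0 x"
        using elim x by (auto simp: G_def)
      have "\<epsilon> * (T powr (1 - \<alpha>) * M) \<le> G * (LBINT s=0..t. (T - s) powr (- \<alpha>))"
        using interval_integral_powr_singularity_ge_ln[OF t \<open>1 \<le> \<alpha>\<close>] log \<open>0 < \<epsilon>\<close> \<open>0 < M\<close>
          \<open>\<not> G \<le> \<epsilon>\<close>
        by (intro mult_mono) auto
      also have "\<epsilon> * (T powr (1 - \<alpha>) * M) = 2 * \<bar>C\<bar> * T + \<bar>C\<bar> + 1"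
        using \<open>0 < \<epsilon>\<close> \<open>0 < T\<close> by (simp add: M_def)
      finally have "2 * \<bar>C\<bar> * T + \<bar>C\<bar> + 1 \<le> G * (LBINT s=0..t. (T - s) powr (- \<alpha>))" .
      moreover have "2 * C * t \<le> 2 * \<bar>C\<bar> * T"
        using t by (intro mult_mono[of "2 * C"]) auto
      ultimately show False
        using u by linarith
    qed
    then show ?case
      by (simp add: G_def)
  qed
  with not_small show False
    by blast
qed

theorem lemma4p1:
  fixes \<Omega> :: "'a::euclidean_space set"
    and J h u0 :: "'a \<Rightarrow> real" and u :: "'a \<Rightarrow> real \<Rightarrow> real"
    and d T \<alpha> :: real
  assumes "open \<Omega>" and "bounded \<Omega>" and "connected \<Omega>" and "\<Omega> \<noteq> {}"
    and "nonlocal_kernel J d" and "ess_bounded_on UNIV J"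
    and "T > 0" and "\<alpha> > 0"
    and "set_borel_measurable lebesgue (UNIV - \<Omega>) h"
    and "ess_bounded_on (UNIV - \<Omega>) h"
    and "AE y in lebesgue. y \<notin> \<Omega> \<longrightarrow> h y \<ge> 0"
    and "(LINT x:\<Omega>|lebesgue. (LINT y:(UNIV - \<Omega>)|lebesgue. J (x - y) * h y)) > 0"
    and "set_borel_measurable lebesgue \<Omega> u0"
    and "ess_bounded_on \<Omega> u0"
    and "AE x in lebesgue. x \<in> \<Omega> \<longrightarrow> u0 x \<ge> 0"
    and "solves_N \<Omega> J (\<lambda>y t. h y * (T - t) powr (- \<alpha>)) T u0 u"
  shows "blows_up_at \<Omega> u T \<longleftrightarrow> \<alpha> \<ge> 1"
proof
  have \<Omega>: "\<Omega> \<in> sets lebesgue"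
    using \<open>open \<Omega>\<close> by simp
  show "1 \<le> \<alpha>" if "blows_up_at \<Omega> u T"
    using solves_N_not_blows_up_of_alpha_lt_1[OF assms(5) \<Omega> _ assms(10,14,16)] that by force
  show "blows_up_at \<Omega> u T" if "1 \<le> \<alpha>"
    using solves_N_blows_up_of_alpha_ge_1[OF assms(5) \<Omega> assms(7) that assms(12,15,16)] .
qed

end
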